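(* Let $(S,K,I)$ be a split graph with $2\le|K|\le|I|$ and $K=\bigcup_{v\in I}N_S(v)$. Let $(R,K,I)$ be a split graph on the same vertex set, with the same clique $K$ and independent set $I$, such that $\deg_R(v)=1$ for all $v\in I$, $K=\bigcup_{v\in I}N_R(v)$, and for all distinct $u,v\in I$: $u,v$ are twins in $R$ (i.e. $N_R(u)=N_R(v)$) if and only if $\sigma_{uv}(S)=0$. Then $S$ is active and $\Phi(S)$ is simple and connected if and only if $S$ is isomorphic to $R$ or to $\overline{R^{\iota}}$.
   Context: All graphs are finite and simple. A split graph is a graph $S$ whose vertex set is a disjoint union $V(S)=K\,\dot\cup\,I$ with $K$ a clique and $I$ an independent set; $(K,I)$ is called a bipartition of $S$, and $(S,K,I)$ denotes $S$ together with this fixed bipartition. A 2-switch in a graph $G$ is performed on four distinct vertices $a,b,c,d$ with $ab,cd\in E(G)$ and $ac,bd\notin E(G)$: it deletes $ab,cd$ and adds $ac,bd$; $a,b,c,d$ are said to participate in it. A vertex is active in $G$ if it participates in some 2-switch on $G$; $G$ is active if all its vertices are active. For a split graph $(S,K,I)$ and distinct $u,v\in I$, $\sigma_{uv}(S)$ is the number of induced subgraphs of $S$ isomorphic to $P_4$ containing both $u$ and $v$. The factor graph $\Phi(S)$ is the loopless multigraph with vertex set $I$ having exactly $\sigma_{uv}(S)$ parallel edges between $u$ and $v$; it is simple if $\sigma_{uv}(S)\in\{0,1\}$ for all $u,v$. Graph notions (connected, complete, etc.) applied to $\Phi(S)$ refer to its underlying simple graph, in which $u\sim v$ iff $\sigma_{uv}(S)\ge1$.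 Two vertices $u,v$ of a graph $G$ are twins if $N_G(u)\setminus\{v\}=N_G(v)\setminus\{u\}$. Inversion: for a split graph $(R,K,I)$, its inverse is the split graph $(R^{\iota},I,K)$ on the same vertex set with $E(R^{\iota})=(E(R)\setminus\{ab:a,b\in K\})\cup\{ab: a,b\in I,\ a\neq b\}$. $\overline{G}$ denotes the complement of $G$; thus $\overline{R^{\iota}}$ has clique $K$, independent set $I$, and $N_{\overline{R^{\iota}}}(v)=K\setminus N_R(v)$ for $v\in I$. *)

theory Defs
  imports Main
begin

definition graph :: "'a set \<Rightarrow> 'a set set \<Rightarrow> bool" where
  "graph V E \<longleftrightarrow> finite V \<and> (\<forall>e\<in>E. e \<subseteq> V \<and> card e = 2)"

definition nbhd :: "'a set set \<Rightarrow> 'a \<Rightarrow> 'a set" where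
  "nbhd E v = {u. {u, v} \<in> E}"

definition deg :: "'a set set \<Rightarrow> 'a \<Rightarrow> nat" where
  "deg E v = card (nbhd E v)"

definition split_graph :: "'a set \<Rightarrow> 'a set set \<Rightarrow> 'a set \<Rightarrow> 'a set \<Rightarrow> bool" where
  "split_graph V E K I \<longleftrightarrow> graph V E \<and> K \<inter> I = {} \<and> K \<union> I = V
     \<and> (\<forall>a\<in>K. \<forall>b\<in>K. a \<noteq> b \<longrightarrow> {a, b} \<in> E)
     \<and> (\<forall>a\<in>I. \<forall>b\<in>I. {a, b} \<notin> E)"

text \<open>x participates in some 2-switch on G: a,b,c,d distinct, ab, cd edges,
ac, bd non-edges.\<close>
definition active_vertex :: "'a set \<Rightarrow> 'a set set \<Rightarrow> 'a \<Rightarrow> bool" where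
  "active_vertex V E x \<longleftrightarrow> (\<exists>a b c d. a \<in> V \<and> b \<in> V \<and> c \<in> V \<and> d \<in> V
      \<and> distinct [a, b, c, d] \<and> {a, b} \<in> E \<and> {c, d} \<in> E
      \<and> {a, c} \<notin> E \<and> {b, d} \<notin> E \<and> x \<in> {a, b, c, d})"

definition active :: "'a set \<Rightarrow> 'a set set \<Rightarrow> bool" where
  "active V E \<longleftrightarrow> (\<forall>x\<in>V. active_vertex V E x)"

definition induces_P4 :: "'a set set \<Rightarrow> 'a set \<Rightarrow> bool" where
  "induces_P4 E X \<longleftrightarrow> (\<exists>a b c d. X = {a, b, c, d} \<and> distinct [a, b, c, d]
      \<and> {a, b} \<in> E \<and> {b, c} \<in> E \<and> {c, d} \<in> E
      \<and> {a, c} \<notin> E \<and> {a, d} \<notin> E \<and> {b, d} \<notin> E)"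

text \<open>sigma_uv(S): number of induced P4 subgraphs containing u and v
(an induced subgraph is determined by its vertex set).\<close>
definition sigma :: "'a set \<Rightarrow> 'a set set \<Rightarrow> 'a \<Rightarrow> 'a \<Rightarrow> nat" where
  "sigma V E u v = card {X. X \<subseteq> V \<and> induces_P4 E X \<and> u \<in> X \<and> v \<in> X}"

text \<open>Factor graph Phi(S) on vertex set I: simple, and connected (underlying
simple graph).\<close>
definition factor_simple :: "'a set \<Rightarrow> 'a set set \<Rightarrow> 'a set \<Rightarrow> bool" where
  "factor_simple V E I \<longleftrightarrow> (\<forall>u\<in>I. \<forall>v\<in>I. u \<noteq> v \<longrightarrow> sigma V E u v \<le> 1)"

definition factor_adj :: "'a set \<Rightarrow> 'a set set \<Rightarrow> 'a set \<Rightarrow> 'a \<Rightarrow> 'a \<Rightarrow> bool" where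
  "factor_adj V E I u v \<longleftrightarrow> u \<in> I \<and> v \<in> I \<and> u \<noteq> v \<and> sigma V E u v \<ge> 1"

definition factor_connected :: "'a set \<Rightarrow> 'a set set \<Rightarrow> 'a set \<Rightarrow> bool" where
  "factor_connected V E I \<longleftrightarrow> I \<noteq> {} \<and> (\<forall>u\<in>I. \<forall>v\<in>I. (factor_adj V E I)\<^sup>*\<^sup>* u v)"

definition twins :: "'a set set \<Rightarrow> 'a \<Rightarrow> 'a \<Rightarrow> bool" where
  "twins E u v \<longleftrightarrow> nbhd E u - {v} = nbhd E v - {u}"

definition graph_iso :: "'a set \<Rightarrow> 'a set set \<Rightarrow> 'b set \<Rightarrow> 'b set set \<Rightarrow> bool" where
  "graph_iso V E W F \<longleftrightarrow> (\<exists>f. bij_betw f V W \<and>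
      (\<forall>x\<in>V. \<forall>y\<in>V. {x, y} \<in> E \<longleftrightarrow> {f x, f y} \<in> F))"

definition complement :: "'a set \<Rightarrow> 'a set set \<Rightarrow> 'a set set" where
  "complement V E = {{a, b} | a b. a \<in> V \<and> b \<in> V \<and> a \<noteq> b} - E"

definition inverse :: "'a set set \<Rightarrow> 'a set \<Rightarrow> 'a set \<Rightarrow> 'a set set" where
  "inverse E K I = (E - {{a, b} | a b. a \<in> K \<and> b \<in> K}) \<union> {{a, b} | a b. a \<in> I \<and> b \<in> I \<and> a \<noteq> b}"

end

theory Submission
  imports Defs
begin

text \<open>Let \<open>\<rho> v\<close> be the unique \<open>R\<close>-neighbour of \<open>v \<in> I\<close>. For independent \<open>u, v\<close> we have
  \<open>\<sigma>\<^sub>u\<^sub>v(S) = |N(u) - N(v)| \<cdot> |N(v) - N(u)|\<close>, so the twin hypothesis says that \<open>\<rho> u = \<rho> v\<close> iff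
  \<open>N\<^sub>S(u)\<close> and \<open>N\<^sub>S(v)\<close> are comparable. If \<open>\<Phi>(S)\<close> is simple, neighbourhoods with different labels
  differ by exactly one vertex each way; so all of them have the same size, equal labels give equal
  neighbourhoods, and \<open>k \<mapsto> N\<^sub>S(\<rho>\<^sup>-\<^sup>1 k)\<close> is a family of \<open>|K|\<close> subsets of \<open>K\<close> covering \<open>K\<close> with
  pairwise differences of size one. Such a family consists either of all singletons or of all
  complements of singletons, which makes \<open>S\<close> a copy of \<open>R\<close> or of \<open>\<not>R\<^sup>\<iota>\<close> up to a permutation of \<open>K\<close>.
  Conversely, in these two shapes every vertex lies in a 2-switch on \<open>u b, c w\<close> with \<open>b\<close> private
  to \<open>u\<close> and \<open>c\<close> private to \<open>w\<close>, \<open>\<sigma> \<le> 1\<close>, and \<open>\<Phi>(S)\<close> contains the complete multipartite graph on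
  the label classes; an isomorphism to \<open>R\<close> or \<open>\<not>R\<^sup>\<iota>\<close> forces the shape because it preserves the
  number of vertices of degree \<open>1\<close>, resp. \<open>|K| - 1\<close>.\<close>

lemma two_le_cardE:
  assumes "2 \<le> card A"
  obtains a b where "a \<in> A" "b \<in> A" "a \<noteq> b"
proof -
  have "finite A" using assms card.infinite by fastforce
  then show ?thesis
    using assms that card_le_Suc0_iff_eq[of A] by fastforce
qed

lemma card_eq_if_card_Diff_eq:
  assumes "finite A" "finite B" "card (A - B) = card (B - A)"
  shows "card A = card B"
  using assms card_Int_Diff[of A B] card_Int_Diff[of B A] by (simp add: Int_commute)

lemma subset_Un_or_eq_insert_Int:
  assumes fin: "finite A" "finite D" and card: "card A = card D" "card (A - B) = 1"
    and diff: "card (D - A) = 1" "card (D - B) = 1"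
  shows "D \<subseteq> A \<union> B \<or> (\<exists>x. x \<notin> A \<union> B \<and> D = insert x (A \<inter> B))"
proof (cases "D \<subseteq> A \<union> B")
  case False
  then obtain x where x: "x \<in> D" "x \<notin> A \<union> B" by blast
  have "D - A = {x}" "D - B = {x}"
    using diff x by (metis Diff_iff UnCI card_1_singletonE singletonD)+
  then have sub: "D - {x} \<subseteq> A \<inter> B" by blast
  have "card (A \<inter> B) = card (D - {x})"
    using card_Int_Diff[OF fin(1), of B] card x fin by simp
  then have "D - {x} = A \<inter> B"
    using card_subset_eq[OF _ sub] fin by (metis finite_Int)
  with x show ?thesis by blast
qed simp

lemma card_le_card_Diff_if_common_core:
  assumes inj: "inj_on F J" and K: "finite K"
    and core: "\<And>j. j \<in> J \<Longrightarrow> C \<subseteq> F j \<and> F j \<subseteq> K \<and> card (F j - C) = 1"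
  shows "card J \<le> card (K - C)"
proof -
  have "F ` J \<subseteq> (\<lambda>y. insert y C) ` (K - C)"
  proof
    fix Y assume "Y \<in> F ` J"
    then obtain j y where "j \<in> J" "Y = F j" "F j - C = {y}"
      using core by (metis card_1_singletonE imageE)
    with core show "Y \<in> (\<lambda>y. insert y C) ` (K - C)" by blast
  qed
  then have "card (F ` J) \<le> card ((\<lambda>y. insert y C) ` (K - C))"
    using K by (intro card_mono) auto
  also have "\<dots> \<le> card (K - C)"
    using K by (intro card_image_le) auto
  finally show ?thesis
    using card_image[OF inj] by simp
qed

lemma unit_Diff_family_common_core:
  assumes fin: "\<And>j. j \<in> J \<Longrightarrow> finite (F j)" and same: "\<And>j. j \<in> J \<Longrightarrow> card (F j) = d"
    and diff: "\<And>i j. i \<in> J \<Longrightarrow> j \<in> J \<Longrightarrow> i \<noteq> j \<Longrightarrow> card (F i - F j) = 1"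
    and ab: "a \<in> J" "b \<in> J" "a \<noteq> b"
    and k: "k \<in> J" "x \<notin> F a \<union> F b" "F k = insert x (F a \<inter> F b)"
    and j: "j \<in> J"
  shows "F a \<inter> F b \<subseteq> F j"
proof -
  have triple: "F j \<subseteq> F a \<union> F i \<or> (\<exists>y. y \<notin> F a \<union> F i \<and> F j = insert y (F a \<inter> F i))"
    if "i \<in> J" "i \<noteq> a" "j \<noteq> a" "j \<noteq> i" for i
    using subset_Un_or_eq_insert_Int[of "F a" "F j" "F i"] fin same diff that ab j by simp
  consider "j = a" | "j = b" | "j = k" | "j \<noteq> a" "j \<noteq> b" "j \<noteq> k" by blast
  then show ?thesis
  proof cases
    case 4
    \<comment> \<open>Inside both \<open>F a \<union> F b\<close> and \<open>F a \<union> F k = insert x (F a)\<close> means inside \<open>F a\<close>.\<close>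
    have "k \<noteq> a" "F a \<inter> F k = F a \<inter> F b" using k by auto
    then consider "F j \<subseteq> F a \<union> F k" "F j \<subseteq> F a \<union> F b" | "F a \<inter> F b \<subseteq> F j"
      using triple[of k] triple[of b] k ab 4 by blast
    then show ?thesis
    proof cases
      case 1
      then have "F j \<subseteq> F a" using k by auto
      then have "F j = F a"
        using card_subset_eq fin same ab j by metis
      then show ?thesis by blast
    qed
  qed (use k in auto)
qed

lemma unit_Diff_family_dichotomy:
  assumes fin: "\<And>j. j \<in> J \<Longrightarrow> finite (F j)" and same: "\<And>j. j \<in> J \<Longrightarrow> card (F j) = d"
    and diff: "\<And>i j. i \<in> J \<Longrightarrow> j \<in> J \<Longrightarrow> i \<noteq> j \<Longrightarrow> card (F i - F j) = 1"
    and ab: "a \<in> J" "b \<in> J" "a \<noteq> b"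
  shows "(\<forall>j\<in>J. F j \<subseteq> F a \<union> F b) \<or> (\<forall>j\<in>J. F a \<inter> F b \<subseteq> F j)"
proof (cases "\<forall>j\<in>J. F j \<subseteq> F a \<union> F b")
  case False
  then obtain k where k: "k \<in> J" "\<not> F k \<subseteq> F a \<union> F b" by blast
  then have "k \<noteq> a" "k \<noteq> b" by auto
  with k obtain x where "x \<notin> F a \<union> F b" "F k = insert x (F a \<inter> F b)"
    using subset_Un_or_eq_insert_Int[OF fin[OF ab(1)] fin[OF k(1)], of "F b"] diff same ab
    by auto
  then show ?thesis
    using unit_Diff_family_common_core[where J = J and F = F, OF fin same diff ab k(1)] by blast
qed simp

lemma unit_Diff_family_cases:
  fixes F :: "'j \<Rightarrow> 'a set"
  assumes K: "finite K" "2 \<le> card K" and J: "card J = card K"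
    and sub: "\<And>j. j \<in> J \<Longrightarrow> F j \<subseteq> K"
    and diff: "\<And>i j. i \<in> J \<Longrightarrow> j \<in> J \<Longrightarrow> i \<noteq> j \<Longrightarrow> card (F i - F j) = 1"
    and cover: "(\<Union>j\<in>J. F j) = K"
  shows "(\<forall>j\<in>J. card (F j) = 1) \<or> (\<forall>j\<in>J. card (F j) = card K - 1)"
proof -
  have fin: "\<And>j. j \<in> J \<Longrightarrow> finite (F j)"
    using sub K(1) finite_subset by blast
  obtain a b where ab: "a \<in> J" "b \<in> J" "a \<noteq> b"
    using J K(2) by (metis two_le_cardE)
  define A B d where "A = F a" and "B = F b" and "d = card A"
  have same: "\<And>j. j \<in> J \<Longrightarrow> card (F j) = d"
    unfolding d_def A_def using card_eq_if_card_Diff_eq fin diff ab by metis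
  have AB: "card (A - B) = 1" "card (B - A) = 1" "card (A \<inter> B) = d - 1" "1 \<le> d"
    using diff ab card_Int_Diff[OF fin[OF ab(1)], of B] unfolding A_def B_def d_def by auto
  from unit_Diff_family_dichotomy[where J = J and F = F, OF fin same diff ab]
  consider "\<forall>j\<in>J. F j \<subseteq> A \<union> B" | "\<forall>j\<in>J. A \<inter> B \<subseteq> F j"
    unfolding A_def B_def by blast
  then show ?thesis
  proof cases
    case 1
    then have "K \<subseteq> A \<union> B" using cover by blast
    then have "card K \<le> Suc d"
      using card_mono[of "A \<union> B" K] card_Un_Int[of A B] fin ab AB same unfolding A_def B_def by simp
    moreover have "A \<subset> K"
      using sub ab AB(2) unfolding A_def B_def by (metis Diff_eq_empty_iff card.empty psubsetI zero_neq_one)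
    then have "d < card K"
      using K(1) psubset_card_mono unfolding d_def by blast
    ultimately have "d = card K - 1" by linarith
    then show ?thesis using same by simp
  next
    case 2
    \<comment> \<open>Every member is the core \<open>A \<inter> B\<close> plus one point, so there are at most \<open>|K| - (d - 1)\<close>.\<close>
    have "card J \<le> card (K - A \<inter> B)"
    proof (rule card_le_card_Diff_if_common_core[OF _ K(1)])
      show "inj_on F J"
        using diff by (fastforce intro: inj_onI)
      show "A \<inter> B \<subseteq> F j \<and> F j \<subseteq> K \<and> card (F j - A \<inter> B) = 1" if "j \<in> J" for j
        using 2 sub[OF that] same[OF that] AB(3,4) that
          card_Diff_subset[OF finite_subset[OF _ fin[OF that]], of "A \<inter> B"]
        by simp
    qed
    also have "\<dots> = card K - (d - 1)"
      using AB sub ab K(1) unfolding A_def by (metis card_Diff_subset finite_subset inf.coboundedI1)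
    finally have "d = 1" using J K(2) AB(4) by linarith
    then show ?thesis using same by simp
  qed
qed

lemma bij_betw_the_elem_if_singletons:
  assumes K: "finite K" and G: "\<And>k. k \<in> K \<Longrightarrow> G k \<subseteq> K \<and> card (G k) = 1" and inj: "inj_on G K"
  shows "bij_betw (\<lambda>k. the_elem (G k)) K K" and "\<And>k. k \<in> K \<Longrightarrow> G k = {the_elem (G k)}"
proof -
  show single: "G k = {the_elem (G k)}" if "k \<in> K" for k
    using G[OF that] by (metis card_1_singletonE the_elem_eq)
  have "inj_on (\<lambda>k. the_elem (G k)) K"
    using inj single by (metis (mono_tags, lifting) inj_on_def)
  moreover have "(\<lambda>k. the_elem (G k)) ` K \<subseteq> K"
    using G single by blast
  ultimately show "bij_betw (\<lambda>k. the_elem (G k)) K K"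
    using endo_inj_surj[OF K] unfolding bij_betw_def by blast
qed

lemma mem_nbhd_iff: "u \<in> nbhd E v \<longleftrightarrow> {v, u} \<in> E"
  by (simp add: nbhd_def insert_commute)

lemma split_graph_finite:
  assumes "split_graph V E K I"
  shows "finite V" "finite K" "finite I"
  using assms unfolding split_graph_def graph_def by auto

lemma split_graph_no_loop:
  assumes "split_graph V E K I"
  shows "{x} \<notin> E"
  using assms unfolding split_graph_def graph_def by fastforce

lemma split_graph_nbhd_subset:
  assumes "split_graph V E K I" and "v \<in> I"
  shows "nbhd E v \<subseteq> K"
proof
  fix u assume "u \<in> nbhd E v"
  then have "{v, u} \<in> E" by (simp add: mem_nbhd_iff)
  with assms show "u \<in> K" unfolding split_graph_def graph_def by blast
qed

lemma graph_nbhd_subset: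
  assumes "graph V E"
  shows "nbhd E x \<subseteq> V"
  using assms unfolding graph_def nbhd_def by blast

lemma split_graph_finite_nbhd:
  assumes "split_graph V E K I"
  shows "finite (nbhd E x)"
  using assms graph_nbhd_subset finite_subset unfolding split_graph_def graph_def by metis

lemma split_graph_edge_iff:
  assumes "split_graph V E K I" and "x \<in> V" and "y \<in> V"
  shows "{x, y} \<in> E \<longleftrightarrow> (x \<in> K \<and> y \<in> K \<and> x \<noteq> y) \<or>
    (x \<in> I \<and> y \<in> K \<and> y \<in> nbhd E x) \<or> (y \<in> I \<and> x \<in> K \<and> x \<in> nbhd E y)"
  using assms split_graph_no_loop[OF assms(1), of x]
  unfolding split_graph_def by (auto simp: mem_nbhd_iff insert_commute)

lemma split_graph_P4_ends:
  assumes S: "split_graph V E K I" and "{a, b, c, d} \<subseteq> V" and "distinct [a, b, c, d]"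
    and "{a, b} \<in> E" "{b, c} \<in> E" "{c, d} \<in> E" "{a, c} \<notin> E" "{a, d} \<notin> E" "{b, d} \<notin> E"
  shows "a \<in> I \<and> b \<in> K \<and> c \<in> K \<and> d \<in> I"
  using assms unfolding split_graph_def by (metis Un_iff insert_subset)

lemma induces_P4I:
  assumes "distinct [a, b, c, d]"
    and "{a, b} \<in> E" "{b, c} \<in> E" "{c, d} \<in> E" "{a, c} \<notin> E" "{a, d} \<notin> E" "{b, d} \<notin> E"
  shows "induces_P4 E {a, b, c, d}"
  unfolding induces_P4_def
  by (rule exI[of _ a], rule exI[of _ b], rule exI[of _ c], rule exI[of _ d]) (use assms in simp)

lemma induces_P4_through_indep_iff:
  assumes S: "split_graph V E K I" and u: "u \<in> I" and v: "v \<in> I" and "u \<noteq> v"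
  shows "X \<subseteq> V \<and> induces_P4 E X \<and> u \<in> X \<and> v \<in> X \<longleftrightarrow>
    (\<exists>b \<in> nbhd E u - nbhd E v. \<exists>c \<in> nbhd E v - nbhd E u. X = {u, b, c, v})"
proof
  assume "X \<subseteq> V \<and> induces_P4 E X \<and> u \<in> X \<and> v \<in> X"
  then obtain a b c d where X: "X = {a, b, c, d}" "X \<subseteq> V" "u \<in> X" "v \<in> X"
    and path: "distinct [a, b, c, d]" "{a, b} \<in> E" "{b, c} \<in> E" "{c, d} \<in> E"
      "{a, c} \<notin> E" "{a, d} \<notin> E" "{b, d} \<notin> E"
    unfolding induces_P4_def by blast
  have ends: "a \<in> I \<and> b \<in> K \<and> c \<in> K \<and> d \<in> I"
    using split_graph_P4_ends[OF S] X path by blast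
  have "K \<inter> I = {}" using S unfolding split_graph_def by blast
  then have "u = a \<and> v = d \<or> u = d \<and> v = a"
    using X ends u v \<open>u \<noteq> v\<close> by auto
  then show "\<exists>b \<in> nbhd E u - nbhd E v. \<exists>c \<in> nbhd E v - nbhd E u. X = {u, b, c, v}"
  proof
    assume "u = a \<and> v = d"
    then have "b \<in> nbhd E u - nbhd E v" "c \<in> nbhd E v - nbhd E u" "X = {u, b, c, v}"
      using X(1) path by (auto simp: mem_nbhd_iff insert_commute)
    then show ?thesis by blast
  next
    assume "u = d \<and> v = a"
    then have "c \<in> nbhd E u - nbhd E v" "b \<in> nbhd E v - nbhd E u" "X = {u, c, b, v}"
      using X(1) path by (auto simp: mem_nbhd_iff insert_commute)
    then show ?thesis by blast
  qed
next
  assume "\<exists>b \<in> nbhd E u - nbhd E v. \<exists>c \<in> nbhd E v - nbhd E u. X = {u, b, c, v}"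
  then obtain b c where b: "b \<in> nbhd E u - nbhd E v" and c: "c \<in> nbhd E v - nbhd E u"
    and X: "X = {u, b, c, v}" by blast
  have "b \<in> K" "c \<in> K"
    using b c split_graph_nbhd_subset[OF S] u v by blast+
  with S b c u v \<open>u \<noteq> v\<close> have "distinct [u, b, c, v]" "{u, b, c, v} \<subseteq> V"
    "{u, b} \<in> E" "{b, c} \<in> E" "{c, v} \<in> E" "{u, c} \<notin> E" "{u, v} \<notin> E" "{b, v} \<notin> E"
    unfolding split_graph_def by (auto simp: mem_nbhd_iff insert_commute)
  then have "induces_P4 E {u, b, c, v}"
    by (intro induces_P4I)
  with \<open>{u, b, c, v} \<subseteq> V\<close> show "X \<subseteq> V \<and> induces_P4 E X \<and> u \<in> X \<and> v \<in> X"
    unfolding X by blast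
qed

lemma sigma_split_graph:
  assumes S: "split_graph V E K I" and "u \<in> I" "v \<in> I" "u \<noteq> v"
  shows "sigma V E u v = card (nbhd E u - nbhd E v) * card (nbhd E v - nbhd E u)"
proof -
  let ?A = "nbhd E u - nbhd E v" and ?B = "nbhd E v - nbhd E u"
  let ?path = "\<lambda>(b, c). {u, b, c, v}"
  have K: "?A \<subseteq> K" "?B \<subseteq> K" "K \<inter> I = {}"
    using assms split_graph_nbhd_subset[OF S] unfolding split_graph_def by blast+
  have "{X. X \<subseteq> V \<and> induces_P4 E X \<and> u \<in> X \<and> v \<in> X} = ?path ` (?A \<times> ?B)"
    using induces_P4_through_indep_iff[OF assms] by auto
  moreover have "inj_on ?path (?A \<times> ?B)"
  proof (rule inj_onI)
    fix p q assume "p \<in> ?A \<times> ?B" "q \<in> ?A \<times> ?B" and eq: "?path p = ?path q"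
    then obtain b c b' c' where p: "p = (b, c)" "b \<in> ?A" "c \<in> ?B"
      and q: "q = (b', c')" "b' \<in> ?A" "c' \<in> ?B" by blast
    have "b' \<in> {u, b, c, v}" "c' \<in> {u, b, c, v}" using eq p q by auto
    moreover have "u \<notin> K" "v \<notin> K" using K \<open>u \<in> I\<close> \<open>v \<in> I\<close> by blast+
    ultimately show "p = q"
      using p q K(1,2) by auto
  qed
  ultimately show ?thesis
    unfolding sigma_def by (simp add: card_image card_cartesian_product)
qed

lemma active_vertexI:
  assumes "{a, b, c, d} \<subseteq> V" "distinct [a, b, c, d]"
    and "{a, b} \<in> E" "{c, d} \<in> E" "{a, c} \<notin> E" "{b, d} \<notin> E" and "x \<in> {a, b, c, d}"
  shows "active_vertex V E x"
  unfolding active_vertex_def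
  by (rule exI[of _ a], rule exI[of _ b], rule exI[of _ c], rule exI[of _ d]) (use assms in simp)

lemma active_vertex_crossing:
  assumes S: "split_graph V E K I" and u: "u \<in> I" and w: "w \<in> I"
    and b: "b \<in> nbhd E u - nbhd E w" and c: "c \<in> nbhd E w - nbhd E u"
    and x: "x \<in> {u, b, c, w}"
  shows "active_vertex V E x"
proof -
  have "b \<in> K" "c \<in> K" "K \<inter> I = {}" "K \<union> I = V"
    using b c split_graph_nbhd_subset[OF S] u w S unfolding split_graph_def by blast+
  with u w b c have "{u, b, c, w} \<subseteq> V" "distinct [u, b, c, w]"
    "{u, b} \<in> E" "{c, w} \<in> E" "{u, c} \<notin> E" "{b, w} \<notin> E"
    by (auto simp: mem_nbhd_iff insert_commute)
  then show ?thesis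
    using x by (rule active_vertexI)
qed

lemma twins_indep_iff:
  assumes S: "split_graph V E K I" and "u \<in> I" "v \<in> I"
  shows "twins E u v \<longleftrightarrow> nbhd E u = nbhd E v"
proof -
  have "u \<notin> nbhd E v" "v \<notin> nbhd E u" "K \<inter> I = {}"
    using assms split_graph_nbhd_subset[OF S] unfolding split_graph_def by blast+
  then show ?thesis
    unfolding twins_def by blast
qed

lemma factor_connected_if_labels_adjacent:
  assumes adj: "\<And>u v. u \<in> I \<Longrightarrow> v \<in> I \<Longrightarrow> \<rho> u \<noteq> \<rho> v \<Longrightarrow> factor_adj V E I u v"
    and two_labels: "u\<^sub>0 \<in> I" "v\<^sub>0 \<in> I" "\<rho> u\<^sub>0 \<noteq> \<rho> v\<^sub>0"
  shows "factor_connected V E I"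
  unfolding factor_connected_def
proof (intro conjI ballI)
  show "I \<noteq> {}" using two_labels by blast
next
  fix u v assume u: "u \<in> I" and v: "v \<in> I"
  obtain w where w: "w \<in> I" "\<rho> w \<noteq> \<rho> u" using two_labels by metis
  show "(factor_adj V E I)\<^sup>*\<^sup>* u v"
  proof (cases "\<rho> u = \<rho> v")
    case True
    then have "factor_adj V E I u w" "factor_adj V E I w v"
      using adj u v w by metis+
    then show ?thesis by auto
  next
    case False
    then show ?thesis using adj u v by auto
  qed
qed

lemma split_graph_card_clique_le_deg:
  assumes S: "split_graph V E K I" and k: "k \<in> K" and v: "v \<in> I" and "k \<in> nbhd E v"
  shows "card K \<le> deg E k"
proof -
  have "finite K" "K \<inter> I = {}"
    using S split_graph_finite[OF S] unfolding split_graph_def by auto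
  have "v \<in> nbhd E k"
    using assms(4) by (simp add: nbhd_def insert_commute)
  moreover have "K - {k} \<subseteq> nbhd E k"
    using S k unfolding split_graph_def nbhd_def by auto
  ultimately have "insert v (K - {k}) \<subseteq> nbhd E k" by simp
  then have "card (insert v (K - {k})) \<le> deg E k"
    unfolding deg_def by (intro card_mono split_graph_finite_nbhd[OF S])
  moreover have "card (insert v (K - {k})) = card K"
  proof -
    have "v \<notin> K" using \<open>K \<inter> I = {}\<close> v by blast
    then have "card (insert v (K - {k})) = Suc (card (K - {k}))"
      using \<open>finite K\<close> by simp
    also have "\<dots> = card K"
      using card.remove[OF \<open>finite K\<close> k] by simp
    finally show ?thesis .
  qed
  ultimately show ?thesis by simp
qed

lemma mem_doubletons_iff:
  "{x, y} \<in> {{a, b} | a b. a \<in> A \<and> b \<in> A \<and> P a b} \<longleftrightarrow>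
    x \<in> A \<and> y \<in> A \<and> (P x y \<or> P y x)"
  by (auto simp: doubleton_eq_iff)

lemma mem_complement_iff:
  "{x, y} \<in> complement V E \<longleftrightarrow> x \<in> V \<and> y \<in> V \<and> x \<noteq> y \<and> {x, y} \<notin> E"
  unfolding complement_def by (auto simp: doubleton_eq_iff)

lemma split_graph_complement_inverse:
  assumes S: "split_graph V E K I"
  shows "split_graph V (complement V (inverse E K I)) K I"
proof -
  have "K \<inter> I = {}" "K \<union> I = V" "finite V"
    using S split_graph_finite[OF S] unfolding split_graph_def by auto
  moreover have "\<forall>e\<in>complement V (inverse E K I). e \<subseteq> V \<and> card e = 2"
    unfolding complement_def by auto
  ultimately show ?thesis
    unfolding split_graph_def graph_def
    using mem_doubletons_iff[of _ _ K "\<lambda>_ _. True"] mem_doubletons_iff[of _ _ I "\<lambda>a b. a \<noteq> b"]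
    by (auto simp: mem_complement_iff inverse_def)
qed

lemma nbhd_complement_inverse:
  assumes S: "split_graph V E K I" and v: "v \<in> I"
  shows "nbhd (complement V (inverse E K I)) v = K - nbhd E v"
proof -
  have "nbhd (complement V (inverse E K I)) v \<subseteq> K"
    using split_graph_nbhd_subset[OF split_graph_complement_inverse[OF S] v] .
  moreover have "K \<inter> I = {}" "K \<union> I = V"
    using S unfolding split_graph_def by auto
  ultimately show ?thesis
    using v mem_doubletons_iff[of v _ K "\<lambda>_ _. True"] mem_doubletons_iff[of v _ I "\<lambda>a b. a \<noteq> b"]
    by (auto simp: mem_nbhd_iff mem_complement_iff inverse_def)
qed

lemma graph_iso_split_graphs:
  assumes S1: "split_graph V E1 K I" and S2: "split_graph V E2 K I" and f: "bij_betw f V V"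
    and f_K: "\<And>x. x \<in> V \<Longrightarrow> f x \<in> K \<longleftrightarrow> x \<in> K" and f_I: "\<And>x. x \<in> I \<Longrightarrow> f x = x"
    and nbhd: "\<And>v y. v \<in> I \<Longrightarrow> y \<in> V \<Longrightarrow> f y \<in> nbhd E2 v \<longleftrightarrow> y \<in> nbhd E1 v"
  shows "graph_iso V E1 V E2"
proof -
  have "K \<inter> I = {}" "K \<union> I = V"
    using S1 unfolding split_graph_def by auto
  moreover have "{x, y} \<in> E1 \<longleftrightarrow> {f x, f y} \<in> E2" if "x \<in> V" "y \<in> V" for x y
  proof -
    have "f x \<in> V" "f y \<in> V" "f x = f y \<longleftrightarrow> x = y"
      using f that by (auto simp: bij_betw_def inj_on_eq_iff)
    with \<open>K \<inter> I = {}\<close> \<open>K \<union> I = V\<close> show ?thesis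
      using that f_K f_I nbhd
      by (auto simp: split_graph_edge_iff[OF S1] split_graph_edge_iff[OF S2])
  qed
  with f show ?thesis
    unfolding graph_iso_def by blast
qed

lemma bij_betw_mem_image_iff:
  assumes "bij_betw \<pi> K K'" and "N \<subseteq> K" and "y \<in> K'"
  shows "y \<in> \<pi> ` N \<longleftrightarrow> inv_into K \<pi> y \<in> N"
proof -
  have "y = \<pi> (inv_into K \<pi> y)"
    using assms by (simp add: bij_betw_def f_inv_into_f)
  moreover have "inv_into K \<pi> (\<pi> z) = z" if "z \<in> N" for z
    using assms that by (meson bij_betw_def inv_into_f_f subsetD)
  ultimately show ?thesis by force
qed

lemma graph_iso_if_nbhd_image:
  assumes S1: "split_graph V E1 K I" and S2: "split_graph V E2 K I"
    and \<pi>: "bij_betw \<pi> K K" and nbhd: "\<And>v. v \<in> I \<Longrightarrow> nbhd E1 v = \<pi> ` nbhd E2 v"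
  shows "graph_iso V E1 V E2"
proof -
  define f where "f x = (if x \<in> K then inv_into K \<pi> x else x)" for x
  have KI: "K \<inter> I = {}" "K \<union> I = V"
    using S1 unfolding split_graph_def by auto
  have g: "bij_betw (inv_into K \<pi>) K K"
    using \<pi> by (rule bij_betw_inv_into)
  have f_on_K: "\<And>x. x \<in> K \<Longrightarrow> f x = inv_into K \<pi> x" and f_on_I: "\<And>x. x \<in> I \<Longrightarrow> f x = id x"
    using KI by (auto simp: f_def)
  have "bij_betw f K K" "bij_betw f I I"
    using bij_betw_cong[of K f "inv_into K \<pi>" K, OF f_on_K] bij_betw_cong[of I f id I, OF f_on_I] g
    by simp_all
  then have f: "bij_betw f V V"
    using bij_betw_combine[of f K K I I] KI by simp
  have f_K: "f x \<in> K \<longleftrightarrow> x \<in> K" if "x \<in> V" for x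
    using that g KI f_on_K f_on_I by (auto simp: bij_betw_def)
  have f_I: "f x = x" if "x \<in> I" for x
    using f_on_I that by simp
  have f_nbhd: "f y \<in> nbhd E2 v \<longleftrightarrow> y \<in> nbhd E1 v" if "v \<in> I" "y \<in> V" for v y
    using bij_betw_mem_image_iff[OF \<pi> split_graph_nbhd_subset[OF S2 that(1)]] nbhd[OF that(1)]
      split_graph_nbhd_subset[OF S1 that(1)] split_graph_nbhd_subset[OF S2 that(1)]
    by (auto simp: f_def)
  show ?thesis
    using graph_iso_split_graphs[OF S1 S2 f f_K f_I f_nbhd] .
qed

lemma deg_eq_if_iso_map:
  assumes G: "graph V E" and H: "graph W F" and f: "bij_betw f V W"
    and edges: "\<forall>x\<in>V. \<forall>y\<in>V. {x, y} \<in> E \<longleftrightarrow> {f x, f y} \<in> F" and x: "x \<in> V"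
  shows "deg E x = deg F (f x)"
proof -
  have "f ` nbhd E x = nbhd F (f x)"
  proof (intro equalityI subsetI)
    fix y assume "y \<in> f ` nbhd E x"
    then obtain z where z: "z \<in> nbhd E x" "y = f z" by blast
    moreover have "z \<in> V" using z graph_nbhd_subset[OF G] by blast
    ultimately show "y \<in> nbhd F (f x)"
      using edges x by (auto simp: mem_nbhd_iff)
  next
    fix y assume y: "y \<in> nbhd F (f x)"
    then obtain z where "z \<in> V" "y = f z"
      using graph_nbhd_subset[OF H] f unfolding bij_betw_def by blast
    with y show "y \<in> f ` nbhd E x"
      using edges x by (auto simp: mem_nbhd_iff)
  qed
  moreover have "inj_on f (nbhd E x)"
    using f graph_nbhd_subset[OF G] unfolding bij_betw_def by (rule inj_on_subset[OF conjunct1])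
  ultimately show ?thesis
    unfolding deg_def by (metis card_image)
qed

lemma card_deg_level_eq_if_iso:
  assumes G: "graph V E" and H: "graph W F" and iso: "graph_iso V E W F"
  shows "card {x \<in> V. deg E x = d} = card {y \<in> W. deg F y = d}"
proof -
  obtain f where f: "bij_betw f V W" and edges: "\<forall>x\<in>V. \<forall>y\<in>V. {x, y} \<in> E \<longleftrightarrow> {f x, f y} \<in> F"
    using iso unfolding graph_iso_def by blast
  have "f ` {x \<in> V. deg E x = d} = {y \<in> W. deg F y = d}"
    using deg_eq_if_iso_map[OF G H f edges] f unfolding bij_betw_def by auto
  moreover have "inj_on f {x \<in> V. deg E x = d}"
    using f unfolding bij_betw_def by (auto intro: inj_on_subset)
  ultimately show ?thesis
    by (metis card_image)
qed

lemma deg_indep_eq_if_iso: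
  assumes S1: "split_graph V E1 K I" and S2: "split_graph V E2 K I"
    and iso: "graph_iso V E1 V E2"
    and deg2: "\<forall>v\<in>I. deg E2 v = d"
    and deg_K: "\<forall>k\<in>K. d < deg E1 k \<and> d < deg E2 k"
    and v: "v \<in> I"
  shows "deg E1 v = d"
proof -
  have KI: "K \<inter> I = {}" "K \<union> I = V"
    using S1 unfolding split_graph_def by auto
  have level2: "{x \<in> V. deg E2 x = d} = I"
    using KI deg2 deg_K by force
  have level1: "{x \<in> V. deg E1 x = d} \<subseteq> I"
    using KI deg_K by force
  have "card {x \<in> V. deg E1 x = d} = card I"
    using card_deg_level_eq_if_iso[OF _ _ iso] S1 S2 level2 unfolding split_graph_def by simp
  then have "{x \<in> V. deg E1 x = d} = I"
    using card_subset_eq[OF split_graph_finite(3)[OF S1] level1] by blast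
  with v show ?thesis by blast
qed

text \<open>In the theorem, \<open>\<rho> v\<close> is the unique neighbour of \<open>v\<close> in \<open>R\<close>.\<close>

locale sigma_labelling =
  fixes V :: "'a set" and E :: "'a set set" and K I :: "'a set" and \<rho> :: "'a \<Rightarrow> 'a"
  assumes split: "split_graph V E K I"
    and two_le_card: "2 \<le> card K"
    and nbhds_cover: "K = (\<Union>v\<in>I. nbhd E v)"
    and labels_onto: "\<rho> ` I = K"
    and same_label_iff: "\<And>u v. u \<in> I \<Longrightarrow> v \<in> I \<Longrightarrow> u \<noteq> v \<Longrightarrow> \<rho> u = \<rho> v \<longleftrightarrow> sigma V E u v = 0"
begin

lemma finite_K: "finite K"
  using split_graph_finite[OF split] by simp

lemma nbhd_subset: "v \<in> I \<Longrightarrow> nbhd E v \<subseteq> K"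
  using split_graph_nbhd_subset[OF split] .

lemma finite_nbhd: "finite (nbhd E v)"
  using split_graph_finite_nbhd[OF split] .

lemma same_label_iff_comparable:
  assumes u: "u \<in> I" and v: "v \<in> I"
  shows "\<rho> u = \<rho> v \<longleftrightarrow> nbhd E u \<subseteq> nbhd E v \<or> nbhd E v \<subseteq> nbhd E u"
proof (cases "u = v")
  case False
  then show ?thesis
    using same_label_iff[OF u v False] sigma_split_graph[OF split u v False] finite_nbhd
    by auto
qed simp

lemma inv_label:
  assumes "k \<in> K"
  shows "inv_into I \<rho> k \<in> I" and "\<rho> (inv_into I \<rho> k) = k"
  using assms labels_onto by (auto intro: inv_into_into f_inv_into_f)

lemma exists_other_label:
  assumes "k \<in> K"
  obtains w where "w \<in> I" "\<rho> w \<noteq> k"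
proof -
  obtain k' where "k' \<in> K" "k' \<noteq> k"
    using two_le_cardE[OF two_le_card] by metis
  then show ?thesis
    using that inv_label by metis
qed

lemma nbhd_eq_iff_same_label:
  assumes uniform: "\<And>u v. u \<in> I \<Longrightarrow> v \<in> I \<Longrightarrow> card (nbhd E u) = card (nbhd E v)"
    and u: "u \<in> I" and v: "v \<in> I"
  shows "nbhd E u = nbhd E v \<longleftrightarrow> \<rho> u = \<rho> v"
  using same_label_iff_comparable[OF u v] uniform[OF u v]
    card_subset_eq[OF finite_nbhd, of "nbhd E u" v] card_subset_eq[OF finite_nbhd, of "nbhd E v" u]
  by auto

lemma nbhd_factors_through_label:
  assumes uniform: "\<And>u v. u \<in> I \<Longrightarrow> v \<in> I \<Longrightarrow> card (nbhd E u) = card (nbhd E v)"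
  shows "inj_on (\<lambda>k. nbhd E (inv_into I \<rho> k)) K"
    and "\<And>v. v \<in> I \<Longrightarrow> nbhd E v = nbhd E (inv_into I \<rho> (\<rho> v))"
proof -
  show "inj_on (\<lambda>k. nbhd E (inv_into I \<rho> k)) K"
  proof (rule inj_onI)
    fix k k' assume "k \<in> K" "k' \<in> K" "nbhd E (inv_into I \<rho> k) = nbhd E (inv_into I \<rho> k')"
    then show "k = k'"
      using nbhd_eq_iff_same_label[OF uniform] inv_label by metis
  qed
  show "nbhd E v = nbhd E (inv_into I \<rho> (\<rho> v))" if "v \<in> I" for v
    using nbhd_eq_iff_same_label[OF uniform] inv_label labels_onto that by (metis imageI)
qed

text \<open>The shapes of \<open>R\<close> and of \<open>\<not>R\<^sup>\<iota>\<close>, with the clique relabelled by \<open>\<pi>\<close>.\<close>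

definition singleton_pattern :: bool where
  "singleton_pattern \<longleftrightarrow> (\<exists>\<pi>. bij_betw \<pi> K K \<and> (\<forall>v\<in>I. nbhd E v = {\<pi> (\<rho> v)}))"

definition cosingleton_pattern :: bool where
  "cosingleton_pattern \<longleftrightarrow> (\<exists>\<pi>. bij_betw \<pi> K K \<and> (\<forall>v\<in>I. nbhd E v = K - {\<pi> (\<rho> v)}))"

lemma singleton_pattern_if_deg_1:
  assumes "\<forall>v\<in>I. deg E v = 1"
  shows singleton_pattern
proof -
  let ?F = "\<lambda>k. nbhd E (inv_into I \<rho> k)"
  have uniform: "\<And>u v. u \<in> I \<Longrightarrow> v \<in> I \<Longrightarrow> card (nbhd E u) = card (nbhd E v)"
    using assms unfolding deg_def by simp
  have F: "?F k \<subseteq> K \<and> card (?F k) = 1" if "k \<in> K" for k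
    using assms nbhd_subset inv_label[OF that] unfolding deg_def by blast
  define \<pi> where "\<pi> k = the_elem (?F k)" for k
  have "bij_betw \<pi> K K" "\<And>k. k \<in> K \<Longrightarrow> ?F k = {\<pi> k}"
    using bij_betw_the_elem_if_singletons[of K ?F, OF finite_K F nbhd_factors_through_label(1)[OF uniform]]
    unfolding \<pi>_def by blast+
  then show ?thesis
    unfolding singleton_pattern_def using nbhd_factors_through_label(2)[OF uniform] labels_onto by blast
qed

lemma cosingleton_pattern_if_deg_card_minus_1:
  assumes "\<forall>v\<in>I. deg E v = card K - 1"
  shows cosingleton_pattern
proof -
  let ?F = "\<lambda>k. nbhd E (inv_into I \<rho> k)"
  have uniform: "\<And>u v. u \<in> I \<Longrightarrow> v \<in> I \<Longrightarrow> card (nbhd E u) = card (nbhd E v)"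
    using assms unfolding deg_def by simp
  have F: "K - ?F k \<subseteq> K \<and> card (K - ?F k) = 1" if "k \<in> K" for k
    using assms nbhd_subset inv_label[OF that] two_le_card finite_nbhd
    unfolding deg_def by (simp add: card_Diff_subset)
  have double_compl: "?F k = K - (K - ?F k)" if "k \<in> K" for k
    using nbhd_subset inv_label[OF that] by blast
  have "inj_on (\<lambda>k. K - ?F k) K"
  proof (rule inj_onI)
    fix k k' assume k: "k \<in> K" "k' \<in> K" and "K - ?F k = K - ?F k'"
    then have "?F k = ?F k'" using double_compl by metis
    with k show "k = k'" using inj_onD[OF nbhd_factors_through_label(1)[OF uniform]] by blast
  qed
  then obtain \<pi> where \<pi>: "bij_betw \<pi> K K" "\<And>k. k \<in> K \<Longrightarrow> K - ?F k = {\<pi> k}"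
    using bij_betw_the_elem_if_singletons[of K "\<lambda>k. K - ?F k", OF finite_K F] by blast
  have "nbhd E v = K - {\<pi> (\<rho> v)}" if "v \<in> I" for v
  proof -
    have "\<rho> v \<in> K" using labels_onto that by blast
    have "nbhd E v = ?F (\<rho> v)" by (rule nbhd_factors_through_label(2)[OF uniform that])
    also have "\<dots> = K - {\<pi> (\<rho> v)}" using double_compl \<pi>(2) \<open>\<rho> v \<in> K\<close> by metis
    finally show ?thesis .
  qed
  with \<pi>(1) show ?thesis
    unfolding cosingleton_pattern_def by blast
qed

lemma card_Diff_eq_1_if_factor_simple:
  assumes simple: "factor_simple V E I" and u: "u \<in> I" and v: "v \<in> I" and "\<rho> u \<noteq> \<rho> v"
  shows "card (nbhd E u - nbhd E v) = 1"
proof -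
  have "u \<noteq> v" using assms by blast
  then have "card (nbhd E u - nbhd E v) * card (nbhd E v - nbhd E u) = 1"
    using simple same_label_iff[OF u v] sigma_split_graph[OF split u v] assms(4) u v
    unfolding factor_simple_def by (metis le_neq_implies_less less_one not_le)
  then show ?thesis by simp
qed

lemma card_nbhd_eq_if_factor_simple:
  assumes simple: "factor_simple V E I" and u: "u \<in> I" and v: "v \<in> I"
  shows "card (nbhd E u) = card (nbhd E v)"
proof -
  have eq: "card (nbhd E x) = card (nbhd E y)" if "x \<in> I" "y \<in> I" "\<rho> x \<noteq> \<rho> y" for x y
    using card_eq_if_card_Diff_eq[OF finite_nbhd finite_nbhd] that
      card_Diff_eq_1_if_factor_simple[OF simple] by metis
  obtain w where "w \<in> I" "\<rho> w \<noteq> \<rho> u"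
    using exists_other_label labels_onto u by blast
  then show ?thesis
    using eq u v by metis
qed

lemma pattern_if_factor_simple:
  assumes simple: "factor_simple V E I"
  shows "singleton_pattern \<or> cosingleton_pattern"
proof -
  let ?F = "\<lambda>k. nbhd E (inv_into I \<rho> k)"
  note uniform = card_nbhd_eq_if_factor_simple[OF simple]
  have "(\<forall>k\<in>K. card (?F k) = 1) \<or> (\<forall>k\<in>K. card (?F k) = card K - 1)"
  proof (rule unit_Diff_family_cases[OF finite_K two_le_card refl])
    show "?F k \<subseteq> K" if "k \<in> K" for k
      using nbhd_subset inv_label[OF that] by blast
    show "card (?F k - ?F k') = 1" if "k \<in> K" "k' \<in> K" "k \<noteq> k'" for k k'
      using card_Diff_eq_1_if_factor_simple[OF simple] inv_label that by metis
    show "(\<Union>k\<in>K. ?F k) = K"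
    proof
      show "(\<Union>k\<in>K. ?F k) \<subseteq> K"
        using nbhd_subset inv_label by blast
      show "K \<subseteq> (\<Union>k\<in>K. ?F k)"
      proof
        fix x assume "x \<in> K"
        then obtain v where "v \<in> I" "x \<in> nbhd E v"
          using nbhds_cover by blast
        then show "x \<in> (\<Union>k\<in>K. ?F k)"
          using nbhd_factors_through_label(2)[OF uniform] labels_onto by blast
      qed
    qed
  qed
  moreover have "deg E v = card (?F (\<rho> v))" if "v \<in> I" for v
    unfolding deg_def using nbhd_factors_through_label(2)[OF uniform that] by simp
  ultimately show ?thesis
    using singleton_pattern_if_deg_1 cosingleton_pattern_if_deg_card_minus_1 labels_onto
    by (metis imageI)
qed

lemma factor_connected: "factor_connected V E I"
proof -
  obtain k where "k \<in> K"
    using two_le_card by fastforce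
  then obtain w where "w \<in> I" "\<rho> w \<noteq> k"
    by (rule exists_other_label)
  moreover have "factor_adj V E I u v" if "u \<in> I" "v \<in> I" "\<rho> u \<noteq> \<rho> v" for u v
    using same_label_iff[of u v] that unfolding factor_adj_def by force
  ultimately show ?thesis
    using factor_connected_if_labels_adjacent[of I \<rho> V E "inv_into I \<rho> k" w] inv_label[OF \<open>k \<in> K\<close>]
    by metis
qed

lemma factor_simple_if_pattern:
  assumes "singleton_pattern \<or> cosingleton_pattern"
  shows "factor_simple V E I"
proof -
  obtain \<pi> where "(\<forall>v\<in>I. nbhd E v = {\<pi> (\<rho> v)}) \<or> (\<forall>v\<in>I. nbhd E v = K - {\<pi> (\<rho> v)})"
    using assms unfolding singleton_pattern_def cosingleton_pattern_def by blast
  note pattern = this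
  have le_1: "card (nbhd E u - nbhd E v) \<le> 1" if "u \<in> I" "v \<in> I" for u v
  proof -
    have "nbhd E u - nbhd E v \<subseteq> {\<pi> (\<rho> u)} \<or> nbhd E u - nbhd E v \<subseteq> {\<pi> (\<rho> v)}"
      using pattern that by auto
    then obtain k where "nbhd E u - nbhd E v \<subseteq> {k}" by blast
    then have "card (nbhd E u - nbhd E v) \<le> card {k}"
      by (rule card_mono[rotated]) simp
    then show ?thesis by simp
  qed
  show ?thesis
    unfolding factor_simple_def
  proof (intro ballI impI)
    fix u v assume "u \<in> I" "v \<in> I" "u \<noteq> v"
    then show "sigma V E u v \<le> 1"
      using sigma_split_graph[OF split] mult_le_mono[OF le_1[of u v] le_1[of v u]] by simp
  qed
qed

lemma crossing_if_pattern:
  assumes "singleton_pattern \<or> cosingleton_pattern"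
  obtains \<pi> where "bij_betw \<pi> K K"
    and "\<And>u w. u \<in> I \<Longrightarrow> w \<in> I \<Longrightarrow> \<rho> u \<noteq> \<rho> w \<Longrightarrow>
      \<exists>b c. b \<in> nbhd E u - nbhd E w \<and> c \<in> nbhd E w - nbhd E u \<and> \<pi> (\<rho> u) \<in> {b, c}"
proof -
  obtain \<pi> where \<pi>: "bij_betw \<pi> K K"
    and pattern: "(\<forall>v\<in>I. nbhd E v = {\<pi> (\<rho> v)}) \<or> (\<forall>v\<in>I. nbhd E v = K - {\<pi> (\<rho> v)})"
    using assms unfolding singleton_pattern_def cosingleton_pattern_def by blast
  have "\<exists>b c. b \<in> nbhd E u - nbhd E w \<and> c \<in> nbhd E w - nbhd E u \<and> \<pi> (\<rho> u) \<in> {b, c}"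
    if u: "u \<in> I" and w: "w \<in> I" and "\<rho> u \<noteq> \<rho> w" for u w
  proof -
    have "\<rho> u \<in> K" "\<rho> w \<in> K" using u w labels_onto by blast+
    then have "\<pi> (\<rho> u) \<noteq> \<pi> (\<rho> w)" "\<pi> (\<rho> u) \<in> K" "\<pi> (\<rho> w) \<in> K"
      using \<pi> \<open>\<rho> u \<noteq> \<rho> w\<close> by (auto simp: bij_betw_def inj_on_eq_iff)
    with pattern u w show ?thesis
      by (metis Diff_iff insertCI singletonD)
  qed
  with \<pi> that show ?thesis by blast
qed

lemma active_if_pattern:
  assumes "singleton_pattern \<or> cosingleton_pattern"
  shows "active V E"
proof -
  obtain \<pi> where \<pi>: "bij_betw \<pi> K K" and crossing: "\<And>u w. u \<in> I \<Longrightarrow> w \<in> I \<Longrightarrow> \<rho> u \<noteq> \<rho> w \<Longrightarrow>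
      \<exists>b c. b \<in> nbhd E u - nbhd E w \<and> c \<in> nbhd E w - nbhd E u \<and> \<pi> (\<rho> u) \<in> {b, c}"
    using crossing_if_pattern[OF assms] by blast
  have "active_vertex V E x" if "x \<in> V" for x
  proof (cases "x \<in> I")
    case True
    obtain w where "w \<in> I" "\<rho> w \<noteq> \<rho> x"
      using exists_other_label labels_onto True by blast
    then obtain b c where "b \<in> nbhd E x - nbhd E w" "c \<in> nbhd E w - nbhd E x"
      using crossing[of x w] True by metis
    then show ?thesis
      using active_vertex_crossing[OF split True \<open>w \<in> I\<close>] by blast
  next
    case False
    then have "x \<in> K"
      using split that unfolding split_graph_def by blast
    then obtain k where k: "k \<in> K" "x = \<pi> k"
      using \<pi> unfolding bij_betw_def by blast
    obtain w where "w \<in> I" "\<rho> w \<noteq> k"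
      using exists_other_label[OF k(1)] by blast
    then obtain b c where "b \<in> nbhd E (inv_into I \<rho> k) - nbhd E w"
        "c \<in> nbhd E w - nbhd E (inv_into I \<rho> k)" "x \<in> {b, c}"
      using crossing[of "inv_into I \<rho> k" w] inv_label[OF k(1)] k by metis
    then show ?thesis
      using active_vertex_crossing[OF split inv_label(1)[OF k(1)] \<open>w \<in> I\<close>] by blast
  qed
  then show ?thesis
    unfolding active_def by blast
qed

lemma card_clique_le_deg:
  assumes "k \<in> K"
  shows "card K \<le> deg E k"
proof -
  obtain v where "v \<in> I" "k \<in> nbhd E v"
    using nbhds_cover assms by blast
  then show ?thesis
    using split_graph_card_clique_le_deg[OF split assms] by blast
qed

lemma singleton_pattern_iff_iso:
  assumes T: "split_graph V T K I" and nbhd_T: "\<And>v. v \<in> I \<Longrightarrow> nbhd T v = {\<rho> v}"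
  shows "singleton_pattern \<longleftrightarrow> graph_iso V E V T"
proof
  assume singleton_pattern
  then obtain \<pi> where "bij_betw \<pi> K K" "\<forall>v\<in>I. nbhd E v = {\<pi> (\<rho> v)}"
    unfolding singleton_pattern_def by blast
  then show "graph_iso V E V T"
    using graph_iso_if_nbhd_image[OF split T] nbhd_T by simp
next
  assume iso: "graph_iso V E V T"
  have "1 < deg T k" if "k \<in> K" for k
  proof -
    have "k \<in> nbhd T (inv_into I \<rho> k)"
      using nbhd_T inv_label[OF that] by simp
    then show ?thesis
      using split_graph_card_clique_le_deg[OF T that inv_label(1)[OF that]] two_le_card by simp
  qed
  moreover have "1 < deg E k" if "k \<in> K" for k
    using card_clique_le_deg[OF that] two_le_card by simp
  moreover have "\<forall>v\<in>I. deg T v = 1"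
    using nbhd_T by (simp add: deg_def)
  ultimately have "\<forall>v\<in>I. deg E v = 1"
    using deg_indep_eq_if_iso[OF split T iso] by blast
  then show singleton_pattern
    by (rule singleton_pattern_if_deg_1)
qed

lemma cosingleton_pattern_iff_iso:
  assumes T: "split_graph V T K I" and nbhd_T: "\<And>v. v \<in> I \<Longrightarrow> nbhd T v = K - {\<rho> v}"
  shows "cosingleton_pattern \<longleftrightarrow> graph_iso V E V T"
proof
  assume cosingleton_pattern
  then obtain \<pi> where \<pi>: "bij_betw \<pi> K K" and nbhd_E: "\<forall>v\<in>I. nbhd E v = K - {\<pi> (\<rho> v)}"
    unfolding cosingleton_pattern_def by blast
  have "nbhd E v = \<pi> ` nbhd T v" if "v \<in> I" for v
  proof -
    have "\<rho> v \<in> K" using labels_onto that by blast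
    then have "\<pi> ` (K - {\<rho> v}) = \<pi> ` K - \<pi> ` {\<rho> v}"
      using \<pi> unfolding bij_betw_def by (intro inj_on_image_set_diff) auto
    then have "\<pi> ` (K - {\<rho> v}) = K - {\<pi> (\<rho> v)}"
      using \<pi> unfolding bij_betw_def by simp
    then show ?thesis
      using nbhd_E nbhd_T that by simp
  qed
  then show "graph_iso V E V T"
    using graph_iso_if_nbhd_image[OF split T \<pi>] by blast
next
  assume iso: "graph_iso V E V T"
  have "card K - 1 < deg T k" if k: "k \<in> K" for k
  proof -
    obtain w where "w \<in> I" "\<rho> w \<noteq> k"
      using exists_other_label[OF k] by blast
    then have "k \<in> nbhd T w"
      using nbhd_T k by simp
    then show ?thesis
      using split_graph_card_clique_le_deg[OF T k \<open>w \<in> I\<close>] two_le_card by simp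
  qed
  moreover have "card K - 1 < deg E k" if "k \<in> K" for k
    using card_clique_le_deg[OF that] two_le_card by simp
  moreover have "\<forall>v\<in>I. deg T v = card K - 1"
    using nbhd_T labels_onto finite_K by (auto simp: deg_def)
  ultimately have "\<forall>v\<in>I. deg E v = card K - 1"
    using deg_indep_eq_if_iso[OF split T iso] by blast
  then show cosingleton_pattern
    by (rule cosingleton_pattern_if_deg_card_minus_1)
qed

end

theorem theorem5p5:
  fixes V :: "'a set" and ES ER :: "'a set set" and K I :: "'a set"
  assumes S: "split_graph V ES K I"
    and cK: "2 \<le> card K" and cKI: "card K \<le> card I"
    and SK: "K = (\<Union>v\<in>I. nbhd ES v)"
    and R: "split_graph V ER K I"
    and Rdeg: "\<forall>v\<in>I. deg ER v = 1"
    and RK: "K = (\<Union>v\<in>I. nbhd ER v)"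
    and tw: "\<forall>u\<in>I. \<forall>v\<in>I. u \<noteq> v \<longrightarrow> (twins ER u v \<longleftrightarrow> sigma V ES u v = 0)"
  shows "(active V ES \<and> factor_simple V ES I \<and> factor_connected V ES I) \<longleftrightarrow>
         (graph_iso V ES V ER \<or> graph_iso V ES V (complement V (inverse ER K I)))"
proof -
  define \<rho> where "\<rho> v = the_elem (nbhd ER v)" for v
  have nbhd_R: "nbhd ER v = {\<rho> v}" if "v \<in> I" for v
    using Rdeg that unfolding deg_def \<rho>_def by (metis card_1_singletonE the_elem_eq)
  have nbhd_coR: "nbhd (complement V (inverse ER K I)) v = K - {\<rho> v}" if "v \<in> I" for v
    using nbhd_complement_inverse[OF R that] nbhd_R[OF that] by simp
  interpret sigma_labelling V ES K I \<rho>
  proof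
    show "\<rho> ` I = K"
      using RK nbhd_R by auto
    show "\<rho> u = \<rho> v \<longleftrightarrow> sigma V ES u v = 0" if "u \<in> I" "v \<in> I" "u \<noteq> v" for u v
      using tw twins_indep_iff[OF R] nbhd_R that by auto
  qed (use S cK SK in auto)
  have "active V ES \<and> factor_simple V ES I \<and> factor_connected V ES I \<longleftrightarrow>
      singleton_pattern \<or> cosingleton_pattern"
    using pattern_if_factor_simple active_if_pattern factor_simple_if_pattern factor_connected
    by blast
  also have "\<dots> \<longleftrightarrow> graph_iso V ES V ER \<or> graph_iso V ES V (complement V (inverse ER K I))"
    using singleton_pattern_iff_iso[OF R nbhd_R]
      cosingleton_pattern_iff_iso[OF split_graph_complement_inverse[OF R] nbhd_coR]
    by simp
  finally show ?thesis .
qed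

end
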